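(* Let $\mathbf{X}$ be an observation generated under one of two hypotheses $\mathrm{H}_0,\mathrm{H}_1$ with prior probabilities $P(\mathrm{H}_0),P(\mathrm{H}_1)$; under $\mathrm{H}_i$ a random parameter $\Theta_i\in\Lambda_i\subseteq\mathbb{R}$ has known prior density $p(\theta_i\mid\mathrm{H}_i)$. Let non-negative coefficients $\lambda_i,\mu_i$, $i\in\{0,1\}$, be given, and fixed families of densities $p^{\mathrm D}_{i,\theta_i}$ and $p^{\mathrm E}_{i,\theta_i}$, $i\in\{0,1\}$, $\theta_i\in\Lambda_i$. Then the policy $\pi^\star=(\delta^\star,\hat\theta_0^\star,\hat\theta_1^\star)$ minimizing $$J^{\mathrm{NP}}_{\mathrm u}(\pi)=\sum_{i=0}^1P(\mathrm{H}_i)\bigl(\lambda_i\alpha_i(\pi,p^{\mathrm D}_{i,\theta_i})+\mu_i\beta_i(\pi,p^{\mathrm E}_{i,\theta_i})\bigr)$$ is given by $$\delta^\star(\mathbf{x})=\begin{cases}0,&D_0^{\mathrm{NP}}(\mathbf{x})<D_1^{\mathrm{NP}}(\mathbf{x}),\\ \kappa\in[0,1],&D_0^{\mathrm{NP}}(\mathbf{x})=D_1^{\mathrm{NP}}(\mathbf{x}),\\ 1,&D_0^{\mathrm{NP}}(\mathbf{x})>D_1^{\mathrm{NP}}(\mathbf{x}),\end{cases}\qquad \hat\theta_i^\star(\mathbf{x})=\mathbb{E}_{p^{\mathrm E}_{i,\theta_i}}[\Theta_i\mid\mathrm{H}_i,\mathbf{x}],$$ with $$D_i^{\mathrm{NP}}(\mathbf{x})=P(\mathrm{H}_{1-i})\lambda_{1-i}\,p^{\mathrm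 D}(\mathbf{x}\mid\mathrm{H}_{1-i})+P(\mathrm{H}_i)\mu_i\,\mathrm{Var}_{p^{\mathrm E}_{i,\theta_i}}[\Theta_i\mid\mathrm{H}_i,\mathbf{x}]\,p^{\mathrm E}(\mathbf{x}\mid\mathrm{H}_i).$$ Moreover, $J^{\mathrm{NP}}_{\mathrm u}(\pi^\star)=\int\min\{D_0^{\mathrm{NP}}(\mathbf{x}),D_1^{\mathrm{NP}}(\mathbf{x})\}\,\mathrm{d}\mathbf{x}$.
   Context: A policy $\pi=(\delta,\hat\theta_0,\hat\theta_1)$ consists of a randomized decision rule $\delta$ mapping observations to $[0,1]$ (probability of accepting $\mathrm{H}_1$) and estimators $\hat\theta_i$ with values in $\Lambda_i$. Error probabilities computed with the densities $p^{\mathrm D}$: $\alpha_0(\pi,p^{\mathrm D}_{0,\theta_0})=\iint\delta(\mathbf{x})p^{\mathrm D}_{0,\theta_0}(\mathbf{x})p(\theta_0\mid\mathrm{H}_0)\mathrm{d}\mathbf{x}\mathrm{d}\theta_0$, $\alpha_1(\pi,p^{\mathrm D}_{1,\theta_1})=\iint(1-\delta(\mathbf{x}))p^{\mathrm D}_{1,\theta_1}(\mathbf{x})p(\theta_1\mid\mathrm{H}_1)\mathrm{d}\mathbf{x}\mathrm{d}\theta_1$. Estimation errors computed with the densities $p^{\mathrm E}$: $\beta_0=\iint(1-\delta)(\hat\theta_0-\theta_0)^2p^{\mathrm E}_{0,\theta_0}(\mathbf{x})p(\theta_0\mid\mathrm{H}_0)\mathrm{d}\mathbf{x}\mathrm{d}\theta_0$,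 $\beta_1=\iint\delta(\hat\theta_1-\theta_1)^2p^{\mathrm E}_{1,\theta_1}(\mathbf{x})p(\theta_1\mid\mathrm{H}_1)\mathrm{d}\mathbf{x}\mathrm{d}\theta_1$. Marginals: $p^{\mathrm D}(\mathbf{x}\mid\mathrm{H}_i)=\int p^{\mathrm D}_{i,\theta_i}(\mathbf{x})p(\theta_i\mid\mathrm{H}_i)\mathrm{d}\theta_i$ and similarly $p^{\mathrm E}(\mathbf{x}\mid\mathrm{H}_i)$. Posterior mean and variance $\mathbb{E}_{p^{\mathrm E}_{i,\theta_i}}[\Theta_i\mid\mathrm{H}_i,\mathbf{x}]$, $\mathrm{Var}_{p^{\mathrm E}_{i,\theta_i}}[\Theta_i\mid\mathrm{H}_i,\mathbf{x}]$ are w.r.t. the posterior density $\propto p^{\mathrm E}_{i,\theta_i}(\mathbf{x})p(\theta_i\mid\mathrm{H}_i)$. *)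

theory Defs
  imports "HOL-Analysis.Analysis"
begin

(* Hypotheses are indexed by i :: nat, i \<in> {0,1}.
   Lam i        : parameter set \<Lambda>_i \<subseteq> \<real>
   prior i \<theta>   : prior density p(\<theta> | H_i)
   p i \<theta> x     : observation density p_{i,\<theta>}(x)  (used for both p^D and p^E)
   Observations x live in a Euclidean space 'a with Lebesgue measure lborel. *)

definition marg :: "(nat \<Rightarrow> real set) \<Rightarrow> (nat \<Rightarrow> real \<Rightarrow> real) \<Rightarrow>
    (nat \<Rightarrow> real \<Rightarrow> 'a::euclidean_space \<Rightarrow> real) \<Rightarrow> nat \<Rightarrow> 'a \<Rightarrow> ennreal" where
  "marg Lam prior p i x = (\<integral>\<^sup>+ \<theta>\<in>Lam i. ennreal (p i \<theta> x * prior i \<theta>) \<partial>lborel)"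

definition post_dens :: "(nat \<Rightarrow> real set) \<Rightarrow> (nat \<Rightarrow> real \<Rightarrow> real) \<Rightarrow>
    (nat \<Rightarrow> real \<Rightarrow> 'a::euclidean_space \<Rightarrow> real) \<Rightarrow> nat \<Rightarrow> 'a \<Rightarrow> real \<Rightarrow> real" where
  "post_dens Lam prior p i x \<theta> = p i \<theta> x * prior i \<theta> / enn2real (marg Lam prior p i x)"

definition post_mean :: "(nat \<Rightarrow> real set) \<Rightarrow> (nat \<Rightarrow> real \<Rightarrow> real) \<Rightarrow>
    (nat \<Rightarrow> real \<Rightarrow> 'a::euclidean_space \<Rightarrow> real) \<Rightarrow> nat \<Rightarrow> 'a \<Rightarrow> real" where
  "post_mean Lam prior p i x =
     set_lebesgue_integral lborel (Lam i) (\<lambda>\<theta>. \<theta> * post_dens Lam prior p i x \<theta>)"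

definition post_var :: "(nat \<Rightarrow> real set) \<Rightarrow> (nat \<Rightarrow> real \<Rightarrow> real) \<Rightarrow>
    (nat \<Rightarrow> real \<Rightarrow> 'a::euclidean_space \<Rightarrow> real) \<Rightarrow> nat \<Rightarrow> 'a \<Rightarrow> ennreal" where
  "post_var Lam prior p i x =
     (\<integral>\<^sup>+ \<theta>\<in>Lam i. ennreal ((\<theta> - post_mean Lam prior p i x)\<^sup>2 * post_dens Lam prior p i x \<theta>) \<partial>lborel)"

definition alpha0 :: "(nat \<Rightarrow> real set) \<Rightarrow> (nat \<Rightarrow> real \<Rightarrow> real) \<Rightarrow>
    (nat \<Rightarrow> real \<Rightarrow> 'a::euclidean_space \<Rightarrow> real) \<Rightarrow> ('a \<Rightarrow> real) \<Rightarrow> ennreal" where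
  "alpha0 Lam prior pD \<delta> =
     (\<integral>\<^sup>+ \<theta>\<in>Lam 0. (\<integral>\<^sup>+ x. ennreal (\<delta> x * pD 0 \<theta> x * prior 0 \<theta>) \<partial>lborel) \<partial>lborel)"

definition alpha1 :: "(nat \<Rightarrow> real set) \<Rightarrow> (nat \<Rightarrow> real \<Rightarrow> real) \<Rightarrow>
    (nat \<Rightarrow> real \<Rightarrow> 'a::euclidean_space \<Rightarrow> real) \<Rightarrow> ('a \<Rightarrow> real) \<Rightarrow> ennreal" where
  "alpha1 Lam prior pD \<delta> =
     (\<integral>\<^sup>+ \<theta>\<in>Lam 1. (\<integral>\<^sup>+ x. ennreal ((1 - \<delta> x) * pD 1 \<theta> x * prior 1 \<theta>) \<partial>lborel) \<partial>lborel)"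

definition beta0 :: "(nat \<Rightarrow> real set) \<Rightarrow> (nat \<Rightarrow> real \<Rightarrow> real) \<Rightarrow>
    (nat \<Rightarrow> real \<Rightarrow> 'a::euclidean_space \<Rightarrow> real) \<Rightarrow> ('a \<Rightarrow> real) \<Rightarrow> ('a \<Rightarrow> real) \<Rightarrow> ennreal" where
  "beta0 Lam prior pE \<delta> est0 =
     (\<integral>\<^sup>+ \<theta>\<in>Lam 0. (\<integral>\<^sup>+ x. ennreal ((1 - \<delta> x) * (est0 x - \<theta>)\<^sup>2 * pE 0 \<theta> x * prior 0 \<theta>) \<partial>lborel) \<partial>lborel)"

definition beta1 :: "(nat \<Rightarrow> real set) \<Rightarrow> (nat \<Rightarrow> real \<Rightarrow> real) \<Rightarrow>
    (nat \<Rightarrow> real \<Rightarrow> 'a::euclidean_space \<Rightarrow> real) \<Rightarrow> ('a \<Rightarrow> real) \<Rightarrow> ('a \<Rightarrow> real) \<Rightarrow> ennreal" where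
  "beta1 Lam prior pE \<delta> est1 =
     (\<integral>\<^sup>+ \<theta>\<in>Lam 1. (\<integral>\<^sup>+ x. ennreal (\<delta> x * (est1 x - \<theta>)\<^sup>2 * pE 1 \<theta> x * prior 1 \<theta>) \<partial>lborel) \<partial>lborel)"

text \<open>The cost J^NP_u of a policy (delta, est0, est1); PH i = P(H_i).\<close>
definition J_NP :: "(nat \<Rightarrow> real) \<Rightarrow> (nat \<Rightarrow> real) \<Rightarrow> (nat \<Rightarrow> real) \<Rightarrow>
    (nat \<Rightarrow> real set) \<Rightarrow> (nat \<Rightarrow> real \<Rightarrow> real) \<Rightarrow>
    (nat \<Rightarrow> real \<Rightarrow> 'a::euclidean_space \<Rightarrow> real) \<Rightarrow> (nat \<Rightarrow> real \<Rightarrow> 'a \<Rightarrow> real) \<Rightarrow>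
    ('a \<Rightarrow> real) \<Rightarrow> ('a \<Rightarrow> real) \<Rightarrow> ('a \<Rightarrow> real) \<Rightarrow> ennreal" where
  "J_NP PH lam mu Lam prior pD pE \<delta> est0 est1 =
     ennreal (PH 0) * (ennreal (lam 0) * alpha0 Lam prior pD \<delta> + ennreal (mu 0) * beta0 Lam prior pE \<delta> est0)
   + ennreal (PH 1) * (ennreal (lam 1) * alpha1 Lam prior pD \<delta> + ennreal (mu 1) * beta1 Lam prior pE \<delta> est1)"

definition D_NP :: "(nat \<Rightarrow> real) \<Rightarrow> (nat \<Rightarrow> real) \<Rightarrow> (nat \<Rightarrow> real) \<Rightarrow>
    (nat \<Rightarrow> real set) \<Rightarrow> (nat \<Rightarrow> real \<Rightarrow> real) \<Rightarrow>
    (nat \<Rightarrow> real \<Rightarrow> 'a::euclidean_space \<Rightarrow> real) \<Rightarrow> (nat \<Rightarrow> real \<Rightarrow> 'a \<Rightarrow> real) \<Rightarrow>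
    nat \<Rightarrow> 'a \<Rightarrow> ennreal" where
  "D_NP PH lam mu Lam prior pD pE i x =
     ennreal (PH (1 - i) * lam (1 - i)) * marg Lam prior pD (1 - i) x
   + ennreal (PH i * mu i) * post_var Lam prior pE i x * marg Lam prior pE i x"

definition delta_star :: "('a \<Rightarrow> nat \<Rightarrow> ennreal) \<Rightarrow> real \<Rightarrow> 'a \<Rightarrow> real" where
  "delta_star D \<kappa> x =
     (if D x 0 < D x 1 then 0 else if D x 0 = D x 1 then \<kappa> else 1)"

end

theory Submission
  imports Defs
begin

(* Exchanging the order of integration writes J^NP_u(delta, est0, est1) as the integral over x of
   (1 - delta x) C_0(est0 x, x) + delta x C_1(est1 x, x), where C_i(c, x) = decision_cost i c x is the cost
   at x of deciding H_i with estimate c. The estimate enters C_i only through the unnormalised posterior risk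
   \<integral> (c - \<theta>)^2 p^E_{i,\<theta>}(x) p(\<theta> | H_i) d\<theta> = (Var + (c - mean)^2) p^E(x | H_i), so wherever the
   marginal p^E(x | H_i) is finite (almost everywhere, as it integrates to 1) C_i(c, x) \<ge> D_i^NP(x),
   with equality at the posterior mean. Finally (1 - t) a + t b \<ge> min a b for t \<in> [0,1], with
   equality for the rule delta_star. *)

definition est_risk :: "(nat \<Rightarrow> real set) \<Rightarrow> (nat \<Rightarrow> real \<Rightarrow> real) \<Rightarrow>
    (nat \<Rightarrow> real \<Rightarrow> 'a::euclidean_space \<Rightarrow> real) \<Rightarrow> nat \<Rightarrow> real \<Rightarrow> 'a \<Rightarrow> ennreal" where
  "est_risk Lam prior p i c x = (\<integral>\<^sup>+\<theta>\<in>Lam i. ennreal ((c - \<theta>)\<^sup>2 * p i \<theta> x * prior i \<theta>) \<partial>lborel)"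

lemma abs_le_1_plus_square: "\<bar>y::real\<bar> \<le> 1 + y\<^sup>2"
  using zero_le_square[of "\<bar>y\<bar> - 1"] by (simp add: power2_eq_square algebra_simps)

lemma set_nn_integral_sq_dev_mean_le:
  assumes [measurable]: "q \<in> borel_measurable lborel" "S \<in> sets lborel"
    and q_nonneg: "\<And>\<theta>. 0 \<le> q \<theta>"
    and q_norm: "(\<integral>\<^sup>+\<theta>\<in>S. ennreal (q \<theta>) \<partial>lborel) = 1"
  shows "(\<integral>\<^sup>+\<theta>\<in>S. ennreal ((\<theta> - (LINT t:S|lborel. t * q t))\<^sup>2 * q \<theta>) \<partial>lborel)
          \<le> (\<integral>\<^sup>+\<theta>\<in>S. ennreal ((c - \<theta>)\<^sup>2 * q \<theta>) \<partial>lborel)"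
proof -
  define w where "w \<theta> = indicator S \<theta> * q \<theta>" for \<theta>
  define m where "m = (LINT t:S|lborel. t * q t)"
  have w_nonneg: "0 \<le> w \<theta>" for \<theta>
    using q_nonneg by (simp add: w_def)
  have [measurable]: "w \<in> borel_measurable lborel"
    unfolding w_def[abs_def] by measurable
  have to_w: "(\<integral>\<^sup>+\<theta>\<in>S. ennreal (f \<theta> * q \<theta>) \<partial>lborel) = (\<integral>\<^sup>+\<theta>. ennreal (f \<theta> * w \<theta>) \<partial>lborel)" for f
    by (rule nn_integral_cong) (auto simp: w_def split: split_indicator)
  have w_int: "integrable lborel w" and w_integral: "(\<integral>\<theta>. w \<theta> \<partial>lborel) = 1"
    using q_norm to_w[of "\<lambda>_. 1"] w_nonneg
    by (auto intro!: integrableI_nn_integral_finite[where x=1] simp: integral_eq_nn_integral)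
  have m_eq: "m = (\<integral>\<theta>. \<theta> * w \<theta> \<partial>lborel)"
    unfolding m_def set_lebesgue_integral_def w_def by (rule Bochner_Integration.integral_cong) auto
  show ?thesis
  proof (cases "(\<integral>\<^sup>+\<theta>. ennreal ((c - \<theta>)\<^sup>2 * w \<theta>) \<partial>lborel) = \<infinity>")
    case True
    then show ?thesis by (simp add: to_w)
  next
    case False
    then have sq_int: "integrable lborel (\<lambda>\<theta>. (c - \<theta>)\<^sup>2 * w \<theta>)"
      by (intro integrableI_nonneg) (auto simp: w_nonneg less_top)
    have lin_int: "integrable lborel (\<lambda>\<theta>. (c - \<theta>) * w \<theta>)"
    proof (rule Bochner_Integration.integrable_bound[OF Bochner_Integration.integrable_add[OF w_int sq_int]])
      show "AE \<theta> in lborel. norm ((c - \<theta>) * w \<theta>) \<le> norm (w \<theta> + (c - \<theta>)\<^sup>2 * w \<theta>)"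
      proof (rule AE_I2)
        fix \<theta>
        have "\<bar>c - \<theta>\<bar> * w \<theta> \<le> (1 + (c - \<theta>)\<^sup>2) * w \<theta>"
          by (rule mult_right_mono[OF abs_le_1_plus_square w_nonneg])
        then show "norm ((c - \<theta>) * w \<theta>) \<le> norm (w \<theta> + (c - \<theta>)\<^sup>2 * w \<theta>)"
          using w_nonneg[of \<theta>] by (simp add: abs_mult distrib_right)
      qed
    qed measurable
    have "(\<lambda>\<theta>. \<theta> * w \<theta>) = (\<lambda>\<theta>. c * w \<theta> - (c - \<theta>) * w \<theta>)"
      by (simp add: algebra_simps)
    then have mean_int: "integrable lborel (\<lambda>\<theta>. \<theta> * w \<theta>)"
      using w_int lin_int by simp
    have lin_mean: "(\<integral>\<theta>. (c - \<theta>) * w \<theta> \<partial>lborel) = c - m"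
      using w_int mean_int w_integral by (simp add: m_eq left_diff_distrib)
    have dev_eq: "(\<theta> - m)\<^sup>2 * w \<theta> = (c - \<theta>)\<^sup>2 * w \<theta> - 2 * (c - m) * ((c - \<theta>) * w \<theta>) + (c - m)\<^sup>2 * w \<theta>" for \<theta>
      by (simp add: power2_eq_square algebra_simps)
    have "integrable lborel (\<lambda>\<theta>. (\<theta> - m)\<^sup>2 * w \<theta>)"
      unfolding dev_eq using sq_int lin_int w_int by simp
    then have "(\<integral>\<^sup>+\<theta>. ennreal ((\<theta> - m)\<^sup>2 * w \<theta>) \<partial>lborel) = ennreal (\<integral>\<theta>. (\<theta> - m)\<^sup>2 * w \<theta> \<partial>lborel)"
      by (intro nn_integral_eq_integral) (auto simp: w_nonneg)
    also have "(\<integral>\<theta>. (\<theta> - m)\<^sup>2 * w \<theta> \<partial>lborel) = (\<integral>\<theta>. (c - \<theta>)\<^sup>2 * w \<theta> \<partial>lborel)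
        - 2 * (c - m) * (\<integral>\<theta>. (c - \<theta>) * w \<theta> \<partial>lborel) + (c - m)\<^sup>2 * (\<integral>\<theta>. w \<theta> \<partial>lborel)"
      unfolding dev_eq using sq_int lin_int w_int by simp
    also have "\<dots> = (\<integral>\<theta>. (c - \<theta>)\<^sup>2 * w \<theta> \<partial>lborel) - (c - m)\<^sup>2"
      unfolding lin_mean w_integral by (simp add: power2_eq_square)
    also have "ennreal \<dots> \<le> ennreal (\<integral>\<theta>. (c - \<theta>)\<^sup>2 * w \<theta> \<partial>lborel)"
      by (intro ennreal_leI) simp
    also have "\<dots> = (\<integral>\<^sup>+\<theta>. ennreal ((c - \<theta>)\<^sup>2 * w \<theta>) \<partial>lborel)"
      using sq_int by (intro nn_integral_eq_integral[symmetric]) (auto simp: w_nonneg)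
    finally show ?thesis
      by (simp add: to_w m_def)
  qed
qed

lemma nn_integral_swap_factor:
  fixes a :: "'a::euclidean_space \<Rightarrow> real" and h :: "real \<Rightarrow> 'a \<Rightarrow> real"
  assumes [measurable]: "a \<in> borel_measurable lborel" "S \<in> sets lborel"
      "(\<lambda>(x, \<theta>). h \<theta> x) \<in> borel_measurable ((lborel::'a measure) \<Otimes>\<^sub>M (lborel::real measure))"
    and a_nonneg: "\<And>x. 0 \<le> a x" and h_nonneg: "\<And>\<theta> x. 0 \<le> h \<theta> x"
  shows "(\<integral>\<^sup>+\<theta>\<in>S. (\<integral>\<^sup>+x. ennreal (a x * h \<theta> x) \<partial>lborel) \<partial>lborel)
       = (\<integral>\<^sup>+x. ennreal (a x) * (\<integral>\<^sup>+\<theta>\<in>S. ennreal (h \<theta> x) \<partial>lborel) \<partial>lborel)"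
proof -
  have [measurable]: "(\<lambda>\<theta>. h \<theta> x) \<in> borel_measurable lborel" "(\<lambda>x. h \<theta> x) \<in> borel_measurable lborel" for x \<theta>
    using measurable_Pair1'[of x lborel lborel] measurable_Pair2'[of \<theta> lborel lborel] by simp_all
  have "(\<integral>\<^sup>+\<theta>\<in>S. (\<integral>\<^sup>+x. ennreal (a x * h \<theta> x) \<partial>lborel) \<partial>lborel)
      = (\<integral>\<^sup>+\<theta>. (\<integral>\<^sup>+x. ennreal (a x * h \<theta> x) * indicator S \<theta> \<partial>lborel) \<partial>lborel)"
    by (intro nn_integral_cong nn_integral_multc[symmetric]) measurable
  also have "\<dots> = (\<integral>\<^sup>+x. (\<integral>\<^sup>+\<theta>. ennreal (a x * h \<theta> x) * indicator S \<theta> \<partial>lborel) \<partial>lborel)"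
    by (rule lborel_pair.Fubini') measurable
  also have "\<dots> = (\<integral>\<^sup>+x. ennreal (a x) * (\<integral>\<^sup>+\<theta>\<in>S. ennreal (h \<theta> x) \<partial>lborel) \<partial>lborel)"
    using a_nonneg h_nonneg
    by (intro nn_integral_cong) (simp add: ennreal_mult nn_integral_cmult[symmetric] mult.assoc)
  finally show ?thesis .
qed

locale parametric_model =
  fixes Lam :: "nat \<Rightarrow> real set" and prior :: "nat \<Rightarrow> real \<Rightarrow> real"
    and p :: "nat \<Rightarrow> real \<Rightarrow> 'a::euclidean_space \<Rightarrow> real" and i :: nat
  assumes Lam_sets[measurable]: "Lam i \<in> sets lborel"
    and prior_measurable[measurable]: "prior i \<in> borel_measurable lborel"
    and kernel_measurable: "(\<lambda>(\<theta>, x). p i \<theta> x) \<in> borel_measurable (lborel \<Otimes>\<^sub>M lborel)"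
    and prior_nonneg: "0 \<le> prior i \<theta>"
    and kernel_nonneg: "0 \<le> p i \<theta> x"
begin

lemma kernel_measurable_swap[measurable]:
  "(\<lambda>(x, \<theta>). p i \<theta> x) \<in> borel_measurable ((lborel::'a measure) \<Otimes>\<^sub>M (lborel::real measure))"
  using measurable_pair_swap[OF kernel_measurable] by simp

lemma kernel_measurable_section: "(\<lambda>\<theta>. p i \<theta> x) \<in> borel_measurable lborel"
  using measurable_Pair1'[of x lborel lborel] kernel_measurable_swap by simp

lemma measurable_marg[measurable]: "marg Lam prior p i \<in> borel_measurable lborel"
  unfolding marg_def[abs_def] by measurable

lemma measurable_post_dens[measurable]:
  "(\<lambda>(x, \<theta>). post_dens Lam prior p i x \<theta>) \<in> borel_measurable ((lborel::'a measure) \<Otimes>\<^sub>M (lborel::real measure))"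
  unfolding post_dens_def by measurable

lemma measurable_post_mean[measurable]: "post_mean Lam prior p i \<in> borel_measurable lborel"
  unfolding post_mean_def[abs_def] set_lebesgue_integral_def by measurable

lemma measurable_post_var[measurable]: "post_var Lam prior p i \<in> borel_measurable lborel"
  unfolding post_var_def[abs_def] by measurable

lemma measurable_est_risk[measurable]:
  assumes [measurable]: "e \<in> borel_measurable lborel"
  shows "(\<lambda>x. est_risk Lam prior p i (e x) x) \<in> borel_measurable lborel"
  unfolding est_risk_def by measurable

lemma nn_integral_weighted_eq_post_dens:
  assumes marg_finite: "marg Lam prior p i x \<noteq> \<infinity>"
    and [measurable]: "f \<in> borel_measurable lborel" and f_nonneg: "\<And>\<theta>. 0 \<le> f \<theta>"
  shows "(\<integral>\<^sup>+\<theta>\<in>Lam i. ennreal (f \<theta> * p i \<theta> x * prior i \<theta>) \<partial>lborel)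
    = (\<integral>\<^sup>+\<theta>\<in>Lam i. ennreal (f \<theta> * post_dens Lam prior p i x \<theta>) \<partial>lborel) * marg Lam prior p i x"
proof (cases "marg Lam prior p i x = 0")
  case True
  then have "AE \<theta> in lborel. ennreal (p i \<theta> x * prior i \<theta>) * indicator (Lam i) \<theta> = 0"
    using kernel_measurable_section[of x] unfolding marg_def by (subst nn_integral_0_iff_AE[symmetric]) auto
  then have "AE \<theta> in lborel. ennreal (f \<theta> * p i \<theta> x * prior i \<theta>) * indicator (Lam i) \<theta> = 0"
    by eventually_elim (auto simp: ennreal_mult'' kernel_nonneg prior_nonneg mult.assoc split: split_indicator)
  then have "(\<integral>\<^sup>+\<theta>\<in>Lam i. ennreal (f \<theta> * p i \<theta> x * prior i \<theta>) \<partial>lborel) = 0"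
    using kernel_measurable_section[of x] by (subst nn_integral_0_iff_AE) auto
  with True show ?thesis
    by simp
next
  case False
  with marg_finite obtain r where r: "marg Lam prior p i x = ennreal r" "0 < r"
    by (cases "marg Lam prior p i x" rule: ennreal_cases) (auto simp: zero_less_iff_neq_zero)
  have [measurable]: "post_dens Lam prior p i x \<in> borel_measurable lborel"
    using kernel_measurable_section[of x] unfolding post_dens_def[abs_def] by measurable
  have "ennreal (f \<theta> * p i \<theta> x * prior i \<theta>) = ennreal (f \<theta> * post_dens Lam prior p i x \<theta>) * ennreal r" for \<theta>
  proof -
    have eq: "f \<theta> * p i \<theta> x * prior i \<theta> = f \<theta> * post_dens Lam prior p i x \<theta> * r"
      using r by (simp add: post_dens_def)
    have "0 \<le> f \<theta> * post_dens Lam prior p i x \<theta>"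
      using r f_nonneg[of \<theta>] kernel_nonneg[of \<theta> x] prior_nonneg[of \<theta>] by (simp add: post_dens_def)
    then show ?thesis
      unfolding eq using r by (simp add: ennreal_mult)
  qed
  then have "(\<integral>\<^sup>+\<theta>\<in>Lam i. ennreal (f \<theta> * p i \<theta> x * prior i \<theta>) \<partial>lborel)
      = (\<integral>\<^sup>+\<theta>. ennreal (f \<theta> * post_dens Lam prior p i x \<theta>) * indicator (Lam i) \<theta> * ennreal r \<partial>lborel)"
    by (simp add: mult_ac)
  also have "\<dots> = (\<integral>\<^sup>+\<theta>\<in>Lam i. ennreal (f \<theta> * post_dens Lam prior p i x \<theta>) \<partial>lborel) * ennreal r"
    by (rule nn_integral_multc) measurable
  finally show ?thesis
    by (simp add: r(1))
qed

lemma est_risk_eq_post_dens: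
  "marg Lam prior p i x \<noteq> \<infinity> \<Longrightarrow>
    est_risk Lam prior p i c x
    = (\<integral>\<^sup>+\<theta>\<in>Lam i. ennreal ((c - \<theta>)\<^sup>2 * post_dens Lam prior p i x \<theta>) \<partial>lborel) * marg Lam prior p i x"
  unfolding est_risk_def by (rule nn_integral_weighted_eq_post_dens) auto

lemma post_dens_normalized:
  assumes "marg Lam prior p i x \<noteq> 0" "marg Lam prior p i x \<noteq> \<infinity>"
  shows "(\<integral>\<^sup>+\<theta>\<in>Lam i. ennreal (post_dens Lam prior p i x \<theta>) \<partial>lborel) = 1"
proof -
  have "marg Lam prior p i x * 1
      = marg Lam prior p i x * (\<integral>\<^sup>+\<theta>\<in>Lam i. ennreal (post_dens Lam prior p i x \<theta>) \<partial>lborel)"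
    using nn_integral_weighted_eq_post_dens[of x "\<lambda>_. 1"] assms(2) by (simp add: marg_def mult.commute)
  with assms show ?thesis
    by (subst (asm) ennreal_mult_cancel_left) auto
qed

lemma est_risk_post_mean:
  "marg Lam prior p i x \<noteq> \<infinity> \<Longrightarrow>
    est_risk Lam prior p i (post_mean Lam prior p i x) x = post_var Lam prior p i x * marg Lam prior p i x"
  by (simp add: est_risk_eq_post_dens post_var_def power2_commute)

lemma post_var_le_est_risk:
  assumes "marg Lam prior p i x \<noteq> \<infinity>"
  shows "post_var Lam prior p i x * marg Lam prior p i x \<le> est_risk Lam prior p i c x"
proof (cases "marg Lam prior p i x = 0")
  case False
  have "post_var Lam prior p i x
      \<le> (\<integral>\<^sup>+\<theta>\<in>Lam i. ennreal ((c - \<theta>)\<^sup>2 * post_dens Lam prior p i x \<theta>) \<partial>lborel)"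
    unfolding post_var_def post_mean_def
    using post_dens_normalized[OF False assms] kernel_nonneg prior_nonneg Lam_sets
    by (intro set_nn_integral_sq_dev_mean_le) (auto simp: post_dens_def)
  then show ?thesis
    using assms by (simp add: est_risk_eq_post_dens mult_right_mono)
qed simp

lemma nn_integral_swap_marg:
  assumes [measurable]: "a \<in> borel_measurable lborel" and "\<And>x. 0 \<le> a x"
  shows "(\<integral>\<^sup>+\<theta>\<in>Lam i. (\<integral>\<^sup>+x. ennreal (a x * p i \<theta> x * prior i \<theta>) \<partial>lborel) \<partial>lborel)
       = (\<integral>\<^sup>+x. ennreal (a x) * marg Lam prior p i x \<partial>lborel)"
  unfolding marg_def mult.assoc
  using assms kernel_nonneg prior_nonneg Lam_sets by (intro nn_integral_swap_factor) auto

lemma nn_integral_swap_est_risk: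
  assumes [measurable]: "a \<in> borel_measurable lborel" "e \<in> borel_measurable lborel" and "\<And>x. 0 \<le> a x"
  shows "(\<integral>\<^sup>+\<theta>\<in>Lam i. (\<integral>\<^sup>+x. ennreal (a x * (e x - \<theta>)\<^sup>2 * p i \<theta> x * prior i \<theta>) \<partial>lborel) \<partial>lborel)
       = (\<integral>\<^sup>+x. ennreal (a x) * est_risk Lam prior p i (e x) x \<partial>lborel)"
  unfolding est_risk_def mult.assoc
  using assms kernel_nonneg prior_nonneg Lam_sets by (intro nn_integral_swap_factor) auto

lemma AE_marg_finite:
  assumes kernel_norm: "\<And>\<theta>. \<theta> \<in> Lam i \<Longrightarrow> (\<integral>\<^sup>+x. ennreal (p i \<theta> x) \<partial>lborel) = 1"
    and prior_finite: "(\<integral>\<^sup>+\<theta>\<in>Lam i. ennreal (prior i \<theta>) \<partial>lborel) \<noteq> \<infinity>"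
  shows "AE x in lborel. marg Lam prior p i x \<noteq> \<infinity>"
proof (rule nn_integral_PInf_AE)
  have "(\<integral>\<^sup>+x. marg Lam prior p i x \<partial>lborel)
      = (\<integral>\<^sup>+\<theta>\<in>Lam i. (\<integral>\<^sup>+x. ennreal (1 * p i \<theta> x * prior i \<theta>) \<partial>lborel) \<partial>lborel)"
    by (subst nn_integral_swap_marg) auto
  also have "\<dots> = (\<integral>\<^sup>+\<theta>\<in>Lam i. ennreal (prior i \<theta>) \<partial>lborel)"
  proof (intro nn_integral_cong)
    fix \<theta>
    have "(\<integral>\<^sup>+x. ennreal (1 * p i \<theta> x * prior i \<theta>) \<partial>lborel) = (\<integral>\<^sup>+x. ennreal (p i \<theta> x) \<partial>lborel) * ennreal (prior i \<theta>)"
      using kernel_measurable_swap measurable_Pair2'[of \<theta> lborel lborel]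
      by (simp add: ennreal_mult kernel_nonneg prior_nonneg nn_integral_multc)
    then show "(\<integral>\<^sup>+x. ennreal (1 * p i \<theta> x * prior i \<theta>) \<partial>lborel) * indicator (Lam i) \<theta>
        = ennreal (prior i \<theta>) * indicator (Lam i) \<theta>"
      using kernel_norm by (simp split: split_indicator)
  qed
  finally show "(\<integral>\<^sup>+x. marg Lam prior p i x \<partial>lborel) \<noteq> \<infinity>"
    using prior_finite by simp
qed measurable

end

lemma measurable_delta_star[measurable]:
  assumes [measurable]: "(\<lambda>x. D x 0) \<in> borel_measurable M" "(\<lambda>x. D x 1) \<in> borel_measurable M"
  shows "delta_star D \<kappa> \<in> borel_measurable M"
  unfolding delta_star_def[abs_def] by measurable

lemma ennreal_one_minus_plus: "0 \<le> t \<Longrightarrow> t \<le> 1 \<Longrightarrow> ennreal (1 - t) + ennreal t = 1"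
  by (subst ennreal_plus[symmetric]) auto

lemma min_le_convex_comb:
  fixes a b :: ennreal
  assumes "0 \<le> t" "t \<le> 1"
  shows "min a b \<le> ennreal (1 - t) * a + ennreal t * b"
proof -
  have "min a b = ennreal (1 - t) * min a b + ennreal t * min a b"
    using ennreal_one_minus_plus[OF assms] by (metis distrib_right mult_1)
  also have "\<dots> \<le> ennreal (1 - t) * a + ennreal t * b"
    by (intro add_mono mult_left_mono) auto
  finally show ?thesis .
qed

lemma delta_star_convex_comb:
  assumes "0 \<le> \<kappa>" "\<kappa> \<le> 1"
  shows "ennreal (1 - delta_star D \<kappa> x) * D x 0 + ennreal (delta_star D \<kappa> x) * D x 1 = min (D x 0) (D x 1)"
  using ennreal_one_minus_plus[OF assms] distrib_right[of "ennreal (1 - \<kappa>)" "ennreal \<kappa>" "D x 0"]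
  by (auto simp: delta_star_def min_def)

locale detection_estimation =
  fixes PH lam mu :: "nat \<Rightarrow> real" and Lam :: "nat \<Rightarrow> real set" and prior :: "nat \<Rightarrow> real \<Rightarrow> real"
    and pD pE :: "nat \<Rightarrow> real \<Rightarrow> 'a::euclidean_space \<Rightarrow> real"
  assumes PH_nonneg: "\<And>i. i \<in> {0,1} \<Longrightarrow> 0 \<le> PH i"
    and coeff_nonneg: "\<And>i. i \<in> {0,1} \<Longrightarrow> 0 \<le> lam i \<and> 0 \<le> mu i"
    and pD_model: "\<And>i. i \<in> {0,1} \<Longrightarrow> parametric_model Lam prior pD i"
    and pE_model: "\<And>i. i \<in> {0,1} \<Longrightarrow> parametric_model Lam prior pE i"
    and pE_norm: "\<And>i \<theta>. i \<in> {0,1} \<Longrightarrow> \<theta> \<in> Lam i \<Longrightarrow> (\<integral>\<^sup>+x. ennreal (pE i \<theta> x) \<partial>lborel) = 1"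
    and prior_finite: "\<And>i. i \<in> {0,1} \<Longrightarrow> (\<integral>\<^sup>+\<theta>\<in>Lam i. ennreal (prior i \<theta>) \<partial>lborel) \<noteq> \<infinity>"
begin

sublocale D0: parametric_model Lam prior pD 0 using pD_model by simp
sublocale D1: parametric_model Lam prior pD 1 using pD_model by simp
sublocale E0: parametric_model Lam prior pE 0 using pE_model by simp
sublocale E1: parametric_model Lam prior pE 1 using pE_model by simp

abbreviation J :: "('a \<Rightarrow> real) \<Rightarrow> ('a \<Rightarrow> real) \<Rightarrow> ('a \<Rightarrow> real) \<Rightarrow> ennreal" where
  "J \<equiv> J_NP PH lam mu Lam prior pD pE"

abbreviation Dnp :: "'a \<Rightarrow> nat \<Rightarrow> ennreal" where
  "Dnp x i \<equiv> D_NP PH lam mu Lam prior pD pE i x"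

definition decision_cost :: "nat \<Rightarrow> real \<Rightarrow> 'a \<Rightarrow> ennreal" where
  "decision_cost i c x =
     ennreal (PH (1 - i) * lam (1 - i)) * marg Lam prior pD (1 - i) x
   + ennreal (PH i * mu i) * est_risk Lam prior pE i c x"

lemma weights_nonneg: "i \<in> {0,1} \<Longrightarrow> 0 \<le> PH i \<and> 0 \<le> lam i \<and> 0 \<le> mu i"
  using PH_nonneg coeff_nonneg by blast

lemma J_eq_nn_integral_decision_cost:
  assumes [measurable]: "\<delta> \<in> borel_measurable lborel" "est0 \<in> borel_measurable lborel" "est1 \<in> borel_measurable lborel"
    and \<delta>_range: "\<And>x. 0 \<le> \<delta> x \<and> \<delta> x \<le> 1"
  shows "J \<delta> est0 est1 =
    (\<integral>\<^sup>+x. ennreal (1 - \<delta> x) * decision_cost 0 (est0 x) x + ennreal (\<delta> x) * decision_cost 1 (est1 x) x \<partial>lborel)"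
proof -
  have alpha0: "alpha0 Lam prior pD \<delta> = (\<integral>\<^sup>+x. ennreal (\<delta> x) * marg Lam prior pD 0 x \<partial>lborel)"
    unfolding alpha0_def by (rule D0.nn_integral_swap_marg) (simp_all add: \<delta>_range)
  have alpha1: "alpha1 Lam prior pD \<delta> = (\<integral>\<^sup>+x. ennreal (1 - \<delta> x) * marg Lam prior pD 1 x \<partial>lborel)"
    unfolding alpha1_def by (rule D1.nn_integral_swap_marg) (simp_all add: \<delta>_range)
  have beta0: "beta0 Lam prior pE \<delta> est0 = (\<integral>\<^sup>+x. ennreal (1 - \<delta> x) * est_risk Lam prior pE 0 (est0 x) x \<partial>lborel)"
    unfolding beta0_def by (rule E0.nn_integral_swap_est_risk) (simp_all add: \<delta>_range)
  have beta1: "beta1 Lam prior pE \<delta> est1 = (\<integral>\<^sup>+x. ennreal (\<delta> x) * est_risk Lam prior pE 1 (est1 x) x \<partial>lborel)"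
    unfolding beta1_def by (rule E1.nn_integral_swap_est_risk) (simp_all add: \<delta>_range)
  have "(\<integral>\<^sup>+x. ennreal (1 - \<delta> x) * decision_cost 0 (est0 x) x + ennreal (\<delta> x) * decision_cost 1 (est1 x) x \<partial>lborel)
      = (\<integral>\<^sup>+x. ennreal (PH 0 * lam 0) * (ennreal (\<delta> x) * marg Lam prior pD 0 x)
          + (ennreal (PH 0 * mu 0) * (ennreal (1 - \<delta> x) * est_risk Lam prior pE 0 (est0 x) x)
          + (ennreal (PH 1 * lam 1) * (ennreal (1 - \<delta> x) * marg Lam prior pD 1 x)
          + ennreal (PH 1 * mu 1) * (ennreal (\<delta> x) * est_risk Lam prior pE 1 (est1 x) x))) \<partial>lborel)"
    unfolding decision_cost_def by (intro nn_integral_cong) (simp add: algebra_simps)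
  also have "\<dots> = J \<delta> est0 est1"
    unfolding J_NP_def alpha0 alpha1 beta0 beta1
    by ((subst nn_integral_add; measurable?)+, (subst nn_integral_cmult; measurable?)+)
      (simp add: weights_nonneg \<delta>_range ennreal_mult distrib_left mult.assoc add.assoc)
  finally show ?thesis ..
qed

lemma measurable_Dnp[measurable]:
  "(\<lambda>x. Dnp x 0) \<in> borel_measurable lborel" "(\<lambda>x. Dnp x 1) \<in> borel_measurable lborel"
  unfolding D_NP_def diff_zero diff_self_eq_0 by (measurable, measurable)

lemma AE_marg_pE_finite: "AE x in lborel. marg Lam prior pE 0 x \<noteq> \<infinity> \<and> marg Lam prior pE 1 x \<noteq> \<infinity>"
  using E0.AE_marg_finite E1.AE_marg_finite pE_norm prior_finite by simp

lemma Dnp_le_decision_cost: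
  assumes "i \<in> {0,1}" "marg Lam prior pE i x \<noteq> \<infinity>"
  shows "Dnp x i \<le> decision_cost i c x"
  unfolding D_NP_def decision_cost_def mult.assoc
  using parametric_model.post_var_le_est_risk[OF pE_model[OF assms(1)] assms(2)] by (intro add_mono mult_left_mono) auto

lemma decision_cost_post_mean:
  assumes "i \<in> {0,1}" "marg Lam prior pE i x \<noteq> \<infinity>"
  shows "decision_cost i (post_mean Lam prior pE i x) x = Dnp x i"
  unfolding D_NP_def decision_cost_def mult.assoc
  using parametric_model.est_risk_post_mean[OF pE_model[OF assms(1)] assms(2)] by simp

lemma nn_integral_min_Dnp_le_J:
  assumes [measurable]: "\<delta> \<in> borel_measurable lborel" "est0 \<in> borel_measurable lborel" "est1 \<in> borel_measurable lborel"
    and \<delta>_range: "\<And>x. 0 \<le> \<delta> x \<and> \<delta> x \<le> 1"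
  shows "(\<integral>\<^sup>+x. min (Dnp x 0) (Dnp x 1) \<partial>lborel) \<le> J \<delta> est0 est1"
  unfolding J_eq_nn_integral_decision_cost[OF assms]
proof (intro nn_integral_mono_AE, use AE_marg_pE_finite in eventually_elim)
  case (elim x)
  have "min (Dnp x 0) (Dnp x 1) \<le> ennreal (1 - \<delta> x) * Dnp x 0 + ennreal (\<delta> x) * Dnp x 1"
    using \<delta>_range by (simp add: min_le_convex_comb)
  also have "\<dots> \<le> ennreal (1 - \<delta> x) * decision_cost 0 (est0 x) x + ennreal (\<delta> x) * decision_cost 1 (est1 x) x"
    using elim by (intro add_mono mult_left_mono Dnp_le_decision_cost) auto
  finally show ?case .
qed

lemma J_delta_star_post_mean:
  assumes "0 \<le> \<kappa>" "\<kappa> \<le> 1"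
  shows "J (delta_star Dnp \<kappa>) (post_mean Lam prior pE 0) (post_mean Lam prior pE 1)
    = (\<integral>\<^sup>+x. min (Dnp x 0) (Dnp x 1) \<partial>lborel)"
proof -
  have "0 \<le> delta_star Dnp \<kappa> x \<and> delta_star Dnp \<kappa> x \<le> 1" for x
    using assms by (simp add: delta_star_def)
  then have "J (delta_star Dnp \<kappa>) (post_mean Lam prior pE 0) (post_mean Lam prior pE 1)
    = (\<integral>\<^sup>+x. ennreal (1 - delta_star Dnp \<kappa> x) * decision_cost 0 (post_mean Lam prior pE 0 x) x
        + ennreal (delta_star Dnp \<kappa> x) * decision_cost 1 (post_mean Lam prior pE 1 x) x \<partial>lborel)"
    by (intro J_eq_nn_integral_decision_cost) measurable
  also have "\<dots> = (\<integral>\<^sup>+x. min (Dnp x 0) (Dnp x 1) \<partial>lborel)"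
  proof (rule nn_integral_cong_AE, use AE_marg_pE_finite in eventually_elim)
    case (elim x)
    then show ?case
      using delta_star_convex_comb[OF assms, of Dnp x] by (simp add: decision_cost_post_mean)
  qed
  finally show ?thesis .
qed

end

theorem theorem4:
  fixes PH lam mu :: "nat \<Rightarrow> real"
    and Lam :: "nat \<Rightarrow> real set"
    and prior :: "nat \<Rightarrow> real \<Rightarrow> real"
    and pD pE :: "nat \<Rightarrow> real \<Rightarrow> 'a::euclidean_space \<Rightarrow> real"
    and \<kappa> :: real
  assumes PH_nonneg: "\<And>i. i \<in> {0,1} \<Longrightarrow> 0 \<le> PH i"
    and PH_sum: "PH 0 + PH 1 = 1"
    and coeff_nonneg: "\<And>i. i \<in> {0,1} \<Longrightarrow> 0 \<le> lam i \<and> 0 \<le> mu i"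
    and Lam_meas: "\<And>i. i \<in> {0,1} \<Longrightarrow> Lam i \<in> sets lborel"
    and prior_meas: "\<And>i. i \<in> {0,1} \<Longrightarrow> prior i \<in> borel_measurable lborel"
    and prior_nonneg: "\<And>i \<theta>. i \<in> {0,1} \<Longrightarrow> 0 \<le> prior i \<theta>"
    and prior_norm: "\<And>i. i \<in> {0,1} \<Longrightarrow> (\<integral>\<^sup>+ \<theta>\<in>Lam i. ennreal (prior i \<theta>) \<partial>lborel) = 1"
    and pD_meas: "\<And>i. i \<in> {0,1} \<Longrightarrow>
        (\<lambda>(\<theta>, x). pD i \<theta> x) \<in> borel_measurable (lborel \<Otimes>\<^sub>M lborel)"
    and pE_meas: "\<And>i. i \<in> {0,1} \<Longrightarrow>
        (\<lambda>(\<theta>, x). pE i \<theta> x) \<in> borel_measurable (lborel \<Otimes>\<^sub>M lborel)"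
    and pD_nonneg: "\<And>i \<theta> x. i \<in> {0,1} \<Longrightarrow> 0 \<le> pD i \<theta> x"
    and pE_nonneg: "\<And>i \<theta> x. i \<in> {0,1} \<Longrightarrow> 0 \<le> pE i \<theta> x"
    and pD_norm: "\<And>i \<theta>. i \<in> {0,1} \<Longrightarrow> \<theta> \<in> Lam i \<Longrightarrow>
        (\<integral>\<^sup>+ x. ennreal (pD i \<theta> x) \<partial>lborel) = 1"
    and pE_norm: "\<And>i \<theta>. i \<in> {0,1} \<Longrightarrow> \<theta> \<in> Lam i \<Longrightarrow>
        (\<integral>\<^sup>+ x. ennreal (pE i \<theta> x) \<partial>lborel) = 1"
    and kappa: "0 \<le> \<kappa>" "\<kappa> \<le> 1"
  defines "D \<equiv> \<lambda>x i. D_NP PH lam mu Lam prior pD pE i x"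
  shows "(\<forall>\<delta> est0 est1.
            \<delta> \<in> borel_measurable lborel \<and> (\<forall>x. 0 \<le> \<delta> x \<and> \<delta> x \<le> 1) \<and>
            est0 \<in> borel_measurable lborel \<and> (\<forall>x. est0 x \<in> Lam 0) \<and>
            est1 \<in> borel_measurable lborel \<and> (\<forall>x. est1 x \<in> Lam 1) \<longrightarrow>
            J_NP PH lam mu Lam prior pD pE (delta_star D \<kappa>)
                 (post_mean Lam prior pE 0) (post_mean Lam prior pE 1)
            \<le> J_NP PH lam mu Lam prior pD pE \<delta> est0 est1)
       \<and> J_NP PH lam mu Lam prior pD pE (delta_star D \<kappa>)
                 (post_mean Lam prior pE 0) (post_mean Lam prior pE 1)
         = (\<integral>\<^sup>+ x. min (D x 0) (D x 1) \<partial>lborel)"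
proof -
  interpret detection_estimation PH lam mu Lam prior pD pE
    using assms by unfold_locales (auto intro!: parametric_model.intro)
  show ?thesis
    unfolding D_def using J_delta_star_post_mean[OF kappa] nn_integral_min_Dnp_le_J by auto
qed

end
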